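(* For all integers $m,n\geq 1$, \[p^{od}_{ed}(m,2n)-p^{od}_{ed}(m,2n-1)=D_o(m,2n).\]
   Context: $\mathcal{P}^{od}_{ed}$ is the set of integer partitions whose parts are all distinct and such that every even part is smaller than every odd part. Partitions consisting only of odd parts, or only of even parts, are allowed. $p^{od}_{ed}(m,n)$ is the number of partitions of $n$ in $\mathcal{P}^{od}_{ed}$ with exactly $m$ parts. $D_o(m,n)$ is the number of partitions of $n$ into exactly $m$ distinct odd parts. *)

theory Defs
  imports Main
begin

text \<open>A partition into distinct parts is represented by its (finite) set of parts,
all positive. The partition is in P^od_ed if every even part is smaller than every odd part.\<close>

definition P_od_ed :: "nat set set" where
  "P_od_ed = {P. finite P \<and> 0 \<notin> P \<and>
      (\<forall>a\<in>P. \<forall>b\<in>P. even a \<longrightarrow> odd b \<longrightarrow> a < b)}"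

definition p_od_ed :: "nat \<Rightarrow> nat \<Rightarrow> nat" where
  "p_od_ed m n = card {P \<in> P_od_ed. card P = m \<and> \<Sum>P = n}"

definition D_o :: "nat \<Rightarrow> nat \<Rightarrow> nat" where
  "D_o m n = card {P :: nat set. finite P \<and> (\<forall>a\<in>P. odd a) \<and> card P = m \<and> \<Sum>P = n}"

end

theory Submission
  imports Defs
begin

text \<open>Raising the smallest odd part of a partition in P^od_ed by one keeps it in P^od_ed
(the new even part exceeds all old even parts and is still below the other odd parts), and
lowering the largest even part by one undoes this. So partitions of N with an odd part are in
bijection with partitions of N + 1 with an even part, with the same number of parts. A partition
of the odd number 2n - 1 always has an odd part, while the partitions of 2n without even parts
are exactly the partitions into distinct odd parts.\<close>

lemma card_insert_Diff_swap:
  assumes "finite P" "x \<in> P" "y \<notin> P"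
  shows "card (insert y (P - {x})) = card P"
  using assms by (metis DiffD1 card_Suc_Diff1 card_insert_disjoint finite_Diff)

lemma sum_insert_Diff_swap:
  fixes P :: "'a :: comm_monoid_add set"
  assumes "finite P" "x \<in> P" "y \<notin> P"
  shows "\<Sum>(insert y (P - {x})) + x = \<Sum>P + y"
  using assms by (simp add: sum.remove add.commute add.left_commute)

lemma finite_sets_with_sum: "finite {P :: nat set. finite P \<and> \<Sum>P = N}"
proof (rule finite_subset)
  show "{P :: nat set. finite P \<and> \<Sum>P = N} \<subseteq> Pow {..N}"
    using member_le_sum[of _ _ "\<lambda>x. x"] by fastforce
qed simp

lemma P_od_edD:
  assumes "P \<in> P_od_ed"
  shows "finite P" "0 \<notin> P" "\<And>a b. a \<in> P \<Longrightarrow> b \<in> P \<Longrightarrow> even a \<Longrightarrow> odd b \<Longrightarrow> a < b"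
  using assms unfolding P_od_ed_def by auto

definition min_odd_part :: "nat set \<Rightarrow> nat" where
  "min_odd_part P = Min {x \<in> P. odd x}"

definition max_even_part :: "nat set \<Rightarrow> nat" where
  "max_even_part P = Max {x \<in> P. even x}"

lemma min_odd_part:
  assumes "finite P" "\<exists>x\<in>P. odd x"
  shows "min_odd_part P \<in> P" "odd (min_odd_part P)"
    "\<And>x. x \<in> P \<Longrightarrow> odd x \<Longrightarrow> min_odd_part P \<le> x"
proof -
  have "finite {x \<in> P. odd x}" "{x \<in> P. odd x} \<noteq> {}" using assms by auto
  then show "min_odd_part P \<in> P" "odd (min_odd_part P)"
    "\<And>x. x \<in> P \<Longrightarrow> odd x \<Longrightarrow> min_odd_part P \<le> x"
    unfolding min_odd_part_def using Min_in by auto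
qed

lemma max_even_part:
  assumes "finite P" "\<exists>x\<in>P. even x"
  shows "max_even_part P \<in> P" "even (max_even_part P)"
    "\<And>x. x \<in> P \<Longrightarrow> even x \<Longrightarrow> x \<le> max_even_part P"
proof -
  have "finite {x \<in> P. even x}" "{x \<in> P. even x} \<noteq> {}" using assms by auto
  then show "max_even_part P \<in> P" "even (max_even_part P)"
    "\<And>x. x \<in> P \<Longrightarrow> even x \<Longrightarrow> x \<le> max_even_part P"
    unfolding max_even_part_def using Max_in by auto
qed

definition raise_min_odd :: "nat set \<Rightarrow> nat set" where
  "raise_min_odd P = insert (min_odd_part P + 1) (P - {min_odd_part P})"

definition lower_max_even :: "nat set \<Rightarrow> nat set" where
  "lower_max_even P = insert (max_even_part P - 1) (P - {max_even_part P})"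

lemma raise_min_odd:
  assumes P: "P \<in> P_od_ed" and odd_part: "\<exists>x\<in>P. odd x"
  shows "raise_min_odd P \<in> P_od_ed" "\<exists>x\<in>raise_min_odd P. even x"
    "card (raise_min_odd P) = card P" "\<Sum>(raise_min_odd P) = \<Sum>P + 1"
    "lower_max_even (raise_min_odd P) = P"
proof -
  define q where "q = min_odd_part P"
  note fin = P_od_edD(1)[OF P] and sep = P_od_edD(3)[OF P]
  note q = min_odd_part[OF fin odd_part, folded q_def]
  have Q: "raise_min_odd P = insert (q + 1) (P - {q})"
    unfolding raise_min_odd_def q_def ..
  have new: "q + 1 \<notin> P"
    using sep[of "q + 1" q] q(1,2) by auto
  have evens_below: "a < q" if "a \<in> P" "even a" for a
    using sep[OF that(1) q(1) that(2) q(2)] .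
  have odds_above: "q + 1 < b" if "b \<in> P - {q}" "odd b" for b
  proof -
    have "q < b" using q(3)[of b] that by force
    then show ?thesis using q(2) that(2) by presburger
  qed
  show "raise_min_odd P \<in> P_od_ed"
    unfolding P_od_ed_def Q
  proof (intro CollectI conjI ballI impI)
    show "finite (insert (q + 1) (P - {q}))" "0 \<notin> insert (q + 1) (P - {q})"
      using fin P_od_edD(2)[OF P] by auto
    fix a b
    assume a: "a \<in> insert (q + 1) (P - {q})" and b: "b \<in> insert (q + 1) (P - {q})"
      and "even a" "odd b"
    have "a \<le> q + 1" using a \<open>even a\<close> evens_below by fastforce
    moreover have "q + 1 < b" using b \<open>odd b\<close> q(2) odds_above by auto
    ultimately show "a < b" by simp
  qed
  show "\<exists>x\<in>raise_min_odd P. even x"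
    using q(2) unfolding Q by auto
  show "card (raise_min_odd P) = card P"
    unfolding Q using card_insert_Diff_swap[OF fin q(1) new] .
  show "\<Sum>(raise_min_odd P) = \<Sum>P + 1"
    unfolding Q using sum_insert_Diff_swap[OF fin q(1) new] by simp
  have "max_even_part (insert (q + 1) (P - {q})) = q + 1"
    using max_even_part[of "insert (q + 1) (P - {q})"] q(2) fin
    by (force dest: evens_below intro: antisym)
  then show "lower_max_even (raise_min_odd P) = P"
    unfolding lower_max_even_def Q using new q(1) by auto
qed

lemma lower_max_even:
  assumes P: "P \<in> P_od_ed" and even_part: "\<exists>x\<in>P. even x"
  shows "lower_max_even P \<in> P_od_ed" "\<exists>x\<in>lower_max_even P. odd x"
    "card (lower_max_even P) = card P" "\<Sum>(lower_max_even P) + 1 = \<Sum>P"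
    "raise_min_odd (lower_max_even P) = P"
proof -
  define e where "e = max_even_part P"
  note fin = P_od_edD(1)[OF P] and sep = P_od_edD(3)[OF P]
  note e = max_even_part[OF fin even_part, folded e_def]
  have Q: "lower_max_even P = insert (e - 1) (P - {e})"
    unfolding lower_max_even_def e_def ..
  have "e \<noteq> 0" using e(1) P_od_edD(2)[OF P] by metis
  then have odd_pred: "odd (e - 1)" and pred_less: "e - 1 < e"
    using e(2) by auto
  have new: "e - 1 \<notin> P"
    using sep[of e "e - 1"] e(1,2) odd_pred pred_less by auto
  have odds_above: "e < b" if "b \<in> P" "odd b" for b
    using sep[OF e(1) that(1) e(2) that(2)] .
  have evens_below: "a < e - 1" if "a \<in> P - {e}" "even a" for a
  proof -
    have "a < e" using e(3)[of a] that by force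
    then show ?thesis using e(2) that(2) by presburger
  qed
  show "lower_max_even P \<in> P_od_ed"
    unfolding P_od_ed_def Q
  proof (intro CollectI conjI ballI impI)
    show "finite (insert (e - 1) (P - {e}))" "0 \<notin> insert (e - 1) (P - {e})"
      using fin P_od_edD(2)[OF P] odd_pred by auto
    fix a b
    assume a: "a \<in> insert (e - 1) (P - {e})" and b: "b \<in> insert (e - 1) (P - {e})"
      and "even a" "odd b"
    have "a < e - 1" using a \<open>even a\<close> odd_pred evens_below by auto
    moreover have "e - 1 \<le> b" using b \<open>odd b\<close> odds_above by fastforce
    ultimately show "a < b" by simp
  qed
  show "\<exists>x\<in>lower_max_even P. odd x"
    using odd_pred unfolding Q by auto
  show "card (lower_max_even P) = card P"
    unfolding Q using card_insert_Diff_swap[OF fin e(1) new] .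
  show "\<Sum>(lower_max_even P) + 1 = \<Sum>P"
    unfolding Q using sum_insert_Diff_swap[OF fin e(1) new] pred_less by simp
  have "min_odd_part (insert (e - 1) (P - {e})) = e - 1"
    using min_odd_part[of "insert (e - 1) (P - {e})"] odd_pred fin
    by (force dest: odds_above intro: antisym)
  then show "raise_min_odd (lower_max_even P) = P"
    unfolding raise_min_odd_def Q using new e(1) pred_less by auto
qed

lemma card_with_odd_part_eq_card_with_even_part:
  "card {P \<in> P_od_ed. card P = m \<and> \<Sum>P = N \<and> (\<exists>x\<in>P. odd x)} =
   card {P \<in> P_od_ed. card P = m \<and> \<Sum>P = N + 1 \<and> (\<exists>x\<in>P. even x)}"
  (is "card ?A = card ?B")
proof (rule bij_betw_same_card, rule bij_betw_byWitness[where f' = lower_max_even])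
  show "\<forall>P\<in>?A. lower_max_even (raise_min_odd P) = P"
    using raise_min_odd(5) by blast
  show "\<forall>P\<in>?B. raise_min_odd (lower_max_even P) = P"
    using lower_max_even(5) by blast
  show "raise_min_odd ` ?A \<subseteq> ?B"
  proof
    fix Q assume "Q \<in> raise_min_odd ` ?A"
    then obtain P where "P \<in> ?A" and "Q = raise_min_odd P" by blast
    then show "Q \<in> ?B" using raise_min_odd[of P] by simp
  qed
  show "lower_max_even ` ?B \<subseteq> ?A"
  proof
    fix Q assume "Q \<in> lower_max_even ` ?B"
    then obtain P where "P \<in> ?B" and "Q = lower_max_even P" by blast
    then show "Q \<in> ?A" using lower_max_even[of P] by simp
  qed
qed

lemma p_od_ed_odd_sum:
  assumes "odd N"
  shows "p_od_ed m N = card {P \<in> P_od_ed. card P = m \<and> \<Sum>P = N \<and> (\<exists>x\<in>P. odd x)}"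
proof -
  have "\<exists>x\<in>P. odd x" if "\<Sum>P = N" for P :: "nat set"
    using assms that dvd_sum[of P 2 "\<lambda>x. x"] by auto
  then show ?thesis
    unfolding p_od_ed_def by metis
qed

lemma p_od_ed_split_even_part:
  "p_od_ed m N =
   card {P \<in> P_od_ed. card P = m \<and> \<Sum>P = N \<and> (\<exists>x\<in>P. even x)} + D_o m N"
proof -
  let ?A = "{P \<in> P_od_ed. card P = m \<and> \<Sum>P = N \<and> (\<exists>x\<in>P. even x)}"
  let ?B = "{P :: nat set. finite P \<and> (\<forall>a\<in>P. odd a) \<and> card P = m \<and> \<Sum>P = N}"
  have "{P \<in> P_od_ed. card P = m \<and> \<Sum>P = N} = ?A \<union> ?B"
    unfolding P_od_ed_def by (auto intro!: odd_pos)
  moreover have "finite ?A" "finite ?B" "?A \<inter> ?B = {}"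
    using finite_sets_with_sum[of N] by (auto simp: P_od_ed_def elim!: finite_subset[rotated])
  ultimately show ?thesis
    unfolding p_od_ed_def D_o_def by (simp add: card_Un_disjoint)
qed

theorem mainTheorem2:
  fixes m n :: nat
  assumes "m \<ge> 1" and "n \<ge> 1"
  shows "int (p_od_ed m (2*n)) - int (p_od_ed m (2*n - 1)) = int (D_o m (2*n))"
proof -
  have "2*n = (2*n - 1) + 1" "odd (2*n - 1)" using \<open>n \<ge> 1\<close> by auto
  then have "p_od_ed m (2*n) = p_od_ed m (2*n - 1) + D_o m (2*n)"
    using p_od_ed_split_even_part[of m "2*n"] p_od_ed_odd_sum[of "2*n - 1" m]
      card_with_odd_part_eq_card_with_even_part[of m "2*n - 1"] by metis
  then show ?thesis by simp
qed

end
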